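(* Let $K/\mathbb{Q}$ be a quadratic extension, and let $x_0,x_1,x_2,x_3\in K$, not all zero, be such that $x_i^2-x_{i-1}^2=x_j^2-x_{j-1}^2$ for all $i,j\in\{1,2,3\}$. Then $x_0\neq 0$; and if $q:=(x_1/x_0)^2-1$, then either $q=0$ or $\frac{(3q+2)^2}{q^2}\in\mathbb{Q}$. *)

theory Defs
  imports Complex_Main
begin

definition quadratic_ext_of_rat :: "'a::field_char_0 itself \<Rightarrow> bool" where
  "quadratic_ext_of_rat _ \<longleftrightarrow>
     vector_space.dim (\<lambda>(r::rat) (y::'a). of_rat r * y) (UNIV :: 'a set) = 2"

end

theory Submission
  imports Defs "HOL-Computational_Algebra.Nth_Powers"
begin

text \<open>
  Equal differences give \<open>x\<^sub>2\<^sup>2 = 2 x\<^sub>1\<^sup>2 - x\<^sub>0\<^sup>2\<close> and \<open>x\<^sub>3\<^sup>2 = 3 x\<^sub>1\<^sup>2 - 2 x\<^sub>0\<^sup>2\<close>. If \<open>x\<^sub>0 = 0\<close>,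
  then \<open>x\<^sub>2/x\<^sub>1\<close> and \<open>x\<^sub>3/x\<^sub>1\<close> are square roots of 2 and 3; the nontrivial automorphism \<open>\<sigma>\<close>
  of \<open>K\<close> negates both, so it fixes their product, which would be a rational square root of 6.

  Otherwise \<open>a = x\<^sub>1/x\<^sub>0\<close>, \<open>b = x\<^sub>2/x\<^sub>0\<close>, \<open>c = x\<^sub>3/x\<^sub>0\<close> satisfy \<open>a\<^sup>2 = 1 + q\<close>,
  \<open>b\<^sup>2 = 1 + 2q\<close>, \<open>c\<^sup>2 = 1 + 3q\<close>, so \<open>(q, abc)\<close> lies on the elliptic curve
  \<open>Y\<^sup>2 = (1 + X)(1 + 2X)(1 + 3X)\<close>. If \<open>q \<notin> \<rat>\<close>, the chord through this point and its
  conjugate is \<open>\<sigma>\<close>-invariant, hence rational, and meets the curve a third time in a rational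
  point. Euler's descent for \<open>x\<^sup>4 - x\<^sup>2y\<^sup>2 + y\<^sup>4 = z\<^sup>2\<close> shows that the rational points have
  \<open>X \<in> {0, -1, -1/2, -1/3, -2/3}\<close>. Evaluating the chord equation at \<open>X = -1\<close> and
  \<open>X = -1/2\<close> excludes all of these except \<open>X = -1/3\<close>, and then comparing coefficients gives
  \<open>3 q \<sigma>(q) + q + \<sigma>(q) = 0\<close>: the conjugate of \<open>(3q + 2)/q\<close> is its negative, so its square
  is rational.
\<close>

section \<open>Euler's quartic \<open>x\<^sup>4 - x\<^sup>2y\<^sup>2 + y\<^sup>4 = z\<^sup>2\<close>\<close>

lemma coprime_if_no_common_prime:
  fixes a b :: "'a::factorial_semiring"
  assumes "a \<noteq> 0 \<or> b \<noteq> 0" and "\<And>p. prime p \<Longrightarrow> p dvd a \<Longrightarrow> p dvd b \<Longrightarrow> False"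
  shows "coprime a b"
proof (rule ccontr)
  assume "\<not> coprime a b"
  then obtain c where c: "c dvd a" "c dvd b" "\<not> is_unit c" by (rule not_coprimeE)
  with assms(1) have "c \<noteq> 0" by auto
  with c(3) obtain p where "p dvd c" "prime p" using prime_divisor_exists by blast
  with c assms(2) show False by (meson dvd_trans)
qed

lemma coprime_of_sum_diff:
  fixes u v :: "'a::{comm_ring_1,algebraic_semidom}"
  assumes "coprime (u + v) (v - u)"
  shows "coprime u v"
  using assms by (rule coprime_imp_coprime) auto

lemma coprime_product_nth_power_int:
  fixes u v w :: int
  assumes "u > 0" "v > 0" "coprime u v" "u * v = w ^ n"
  obtains m k where "u = m ^ n" "v = k ^ n"
proof -
  have factor: "\<exists>m. a = m ^ n" if "a > 0" "b > 0" "coprime a b" "a * b = w ^ n" for a b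
  proof -
    have "nat a * nat b = nat \<bar>w\<bar> ^ n"
      using that by (metis abs_mult abs_of_pos mult_pos_pos nat_abs_mult_distrib nat_power_eq abs_ge_zero power_abs)
    hence "is_nth_power n (nat a)"
      using is_nth_power_mult_coprime_natD(1) that(1-3)
      by (metis coprime_int_iff is_nth_powerI int_nat_eq less_imp_le zero_less_nat_eq)
    then obtain m where "nat a = m ^ n" by (auto elim: is_nth_powerE)
    hence "a = int m ^ n" using that(1) by (metis int_nat_eq less_imp_le of_nat_power)
    thus ?thesis by blast
  qed
  show thesis
    using factor[OF assms] factor[of v u] assms that by (metis coprime_commute mult.commute)
qed

lemma odd_odd_halves:
  fixes z t :: int
  assumes "odd z" "odd t" "\<bar>t\<bar> < z"
  obtains u v where "0 < u" "0 < v" "z = u + v" "t = v - u"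
proof -
  have "even (z - t)" "even (z + t)" using assms(1,2) by simp_all
  then obtain u v where u: "z - t = 2 * u" and v: "z + t = 2 * v" by (meson evenE)
  show thesis by (rule that[of u v]) (use u v assms(3) in linarith)+
qed

lemma odd_square_plus_square_not_dvd_4:
  fixes s y :: int
  assumes "odd s"
  shows "\<not> 4 dvd y^2 + s^2"
proof -
  obtain k where "s = 2 * k + 1" using assms by (rule oddE)
  hence s2: "s^2 = 4 * (k^2 + k) + 1" by (simp add: power2_eq_square algebra_simps)
  obtain j where "y = 2 * j \<or> y = 2 * j + 1" by (metis evenE oddE)
  hence "y^2 = 4 * j^2 \<or> y^2 = 4 * (j^2 + j) + 1" by (auto simp: power2_eq_square algebra_simps)
  with s2 show ?thesis by presburger
qed

lemma three_dvd_square_minus_twice_square: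
  fixes x y :: int
  assumes "3 dvd y^2 - 2 * x^2"
  shows "3 dvd x \<and> 3 dvd y"
proof -
  have square_mod_3: "3 dvd a \<or> (\<exists>k. a^2 = 3 * k + 1)" for a :: int
  proof -
    have "\<exists>k. a = 3 * k \<or> a = 3 * k + 1 \<or> a = 3 * k + 2" by presburger
    then obtain k where "a = 3 * k \<or> a = 3 * k + 1 \<or> a = 3 * k + 2" by blast
    moreover have "(3 * k + 1)^2 = 3 * (3 * k^2 + 2 * k) + 1" "(3 * k + 2)^2 = 3 * (3 * k^2 + 4 * k + 1) + 1"
      by (simp_all add: power2_eq_square algebra_simps)
    ultimately show ?thesis by fastforce
  qed
  have "3 dvd y^2 \<longleftrightarrow> 3 dvd y" "3 dvd x^2 \<longleftrightarrow> 3 dvd x"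
    by (simp_all add: prime_dvd_power_iff[of "3::int"])
  with assms square_mod_3[of x] square_mod_3[of y] show ?thesis by presburger
qed

definition nontrivial_euler_quartic :: "int \<Rightarrow> int \<Rightarrow> int \<Rightarrow> bool" where
  "nontrivial_euler_quartic x y z \<longleftrightarrow>
     coprime x y \<and> z^2 = x^4 - x^2 * y^2 + y^4 \<and> x \<noteq> 0 \<and> y \<noteq> 0 \<and> x^2 \<noteq> y^2 \<and> z > 0"

lemma euler_quartic_coprime:
  fixes x y z :: int
  assumes "coprime x y" "z^2 = x^4 - x^2 * y^2 + y^4"
  shows "coprime z x"
proof -
  have "coprime (y^4) x" using assms(1) by (simp add: coprime_commute)
  moreover have "e dvd y^4" if "e dvd z" "e dvd x" for e
  proof -
    have "y^4 = z * z - x * (x^3 - x * y^2)"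
      using assms(2) by (simp add: power2_eq_square power3_eq_cube power4_eq_xxxx algebra_simps)
    with that show ?thesis by (metis dvd_diff dvd_mult2)
  qed
  ultimately show ?thesis by (rule coprime_imp_coprime) simp
qed

text \<open>
  The primitive triple \<open>d\<^sup>2 = (2s)\<^sup>2 + t\<^sup>2\<close> with \<open>t\<close> odd has \<open>t = n\<^sup>2 - m\<^sup>2\<close> and \<open>s\<^sup>2 = m\<^sup>2n\<^sup>2\<close>,
  and then \<open>s\<^sup>2 + t\<^sup>2 = m\<^sup>4 - m\<^sup>2n\<^sup>2 + n\<^sup>4\<close>.
\<close>

lemma euler_quartic_of_pythagorean_triple:
  fixes d t s w :: int
  assumes "odd d" "odd t" "coprime d t" "d > 0" "d^2 = 4 * s^2 + t^2" "s \<noteq> 0"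
    and "w^2 = s^2 + t^2" "w > 0"
  shows "\<exists>m n. nontrivial_euler_quartic m n w"
proof -
  have "t^2 < d^2" using assms(5,6) by simp
  hence "\<bar>t\<bar> < d" using \<open>d > 0\<close> by (metis power2_abs power_less_imp_less_base less_imp_le)
  then obtain u v where uv: "0 < u" "0 < v" "d = u + v" "t = v - u"
    using odd_odd_halves \<open>odd d\<close> \<open>odd t\<close> by blast
  hence "coprime u v" using \<open>coprime d t\<close> by (simp add: coprime_of_sum_diff)
  moreover have "u * v = s^2" using assms(5) uv by (simp add: power2_eq_square algebra_simps)
  ultimately obtain m n where m: "u = m^2" and n: "v = n^2"
    using coprime_product_nth_power_int uv(1,2) by blast
  have "t = n^2 - m^2" "s^2 = m^2 * n^2" using uv m n \<open>u * v = s^2\<close> by (simp_all add: power_mult_distrib)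
  have "nontrivial_euler_quartic m n w"
    unfolding nontrivial_euler_quartic_def
  proof (intro conjI)
    show "coprime m n" using \<open>coprime u v\<close> m n by simp
    show "w^2 = m^4 - m^2 * n^2 + n^4" using assms(7) \<open>t = n^2 - m^2\<close> \<open>s^2 = m^2 * n^2\<close>
      by (simp add: power2_eq_square power4_eq_xxxx algebra_simps)
    show "m \<noteq> 0" "n \<noteq> 0" using uv m n by auto
    show "m^2 \<noteq> n^2" using \<open>odd t\<close> \<open>t = n^2 - m^2\<close> by (metis diff_self even_zero)
  qed (use \<open>w > 0\<close> in simp)
  thus ?thesis by blast
qed

lemma euler_quartic_descent_odd:
  assumes sol: "nontrivial_euler_quartic x y z" and "odd x" "odd y"
  obtains m n z' where "nontrivial_euler_quartic m n z'" "z' < z"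
proof -
  from sol have cop: "coprime x y" and eq: "z^2 = x^4 - x^2 * y^2 + y^4"
    and xy: "x^2 \<noteq> y^2" and zpos: "z > 0"
    by (simp_all add: nontrivial_euler_quartic_def)
  define T where "T = x * y"
  have "even (x^2 - y^2)" "even (x^2 + y^2)" using \<open>odd x\<close> \<open>odd y\<close> by simp_all
  then obtain S z' where S: "x^2 - y^2 = 2 * S" and z': "x^2 + y^2 = 2 * z'" by (meson evenE)
  have "S \<noteq> 0" using xy S by simp
  have "odd T" using \<open>odd x\<close> \<open>odd y\<close> by (simp add: T_def)
  have "z^2 = (x^2 - y^2)^2 + T^2"
    unfolding eq T_def by (simp add: power2_eq_square power4_eq_xxxx algebra_simps)
  hence zST: "z^2 = 4 * S^2 + T^2" by (simp add: S power_mult_distrib)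
  have "(2 * z')^2 = (x^2 - y^2)^2 + 4 * T^2"
    unfolding z'[symmetric] T_def by (simp add: power2_eq_square algebra_simps)
  hence z'ST: "z'^2 = S^2 + T^2" by (simp add: S power_mult_distrib)
  have "odd (z^2)" unfolding zST using \<open>odd T\<close> by simp
  hence "odd z" by simp
  have "coprime z x" using euler_quartic_coprime[OF cop eq] .
  moreover have "coprime z y"
    using euler_quartic_coprime[of y x z] cop eq by (simp add: coprime_commute algebra_simps)
  ultimately have "coprime z T" by (simp add: T_def)
  have "x^2 > 0" using \<open>odd x\<close> by (metis even_zero zero_less_power2)
  hence "z' > 0" using z' by (smt (verit) zero_le_power2)
  then obtain m n where "nontrivial_euler_quartic m n z'"
    using euler_quartic_of_pythagorean_triple[OF \<open>odd z\<close> \<open>odd T\<close> \<open>coprime z T\<close> zpos zST \<open>S \<noteq> 0\<close> z'ST]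
    by blast
  moreover have "z'^2 < z^2" using z'ST zST \<open>S \<noteq> 0\<close> by simp
  with zpos have "z' < z" by (simp add: power_less_imp_less_base)
  ultimately show thesis by (rule that)
qed

lemma euler_quartic_of_square_factorization:
  fixes a b y :: int
  assumes cop: "coprime a b" and "b \<noteq> 0" and "odd y"
    and y: "y^2 = (a^2 - b^2) * (a^2 + 3 * b^2)"
  shows "\<exists>m n. nontrivial_euler_quartic m n \<bar>a\<bar>"
proof -
  define P Q where "P = a^2 - b^2" and "Q = a^2 + 3 * b^2"
  have yPQ: "y^2 = P * Q" unfolding y P_def Q_def ..
  have "odd (P * Q)" using \<open>odd y\<close> by (simp add: yPQ[symmetric])
  have common: "e dvd a^2 \<and> e dvd b^2" if e: "e dvd P" "e dvd Q" for e
  proof -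
    have "odd e" using e \<open>odd (P * Q)\<close> by (meson dvd_mult2 dvd_trans)
    hence "coprime e 4" using coprime_power_right_iff[of e 2 2] by simp
    moreover have "4 * a^2 = 3 * P + Q" "4 * b^2 = Q - P" by (simp_all add: P_def Q_def)
    hence "e dvd 4 * a^2" "e dvd 4 * b^2" using e by simp_all
    ultimately show ?thesis by (simp add: coprime_dvd_mult_right_iff)
  qed
  have "coprime (a^2) (b^2)" using cop by simp
  hence "coprime P Q" by (rule coprime_imp_coprime) (simp_all add: common)
  have "Q > 0" using \<open>b \<noteq> 0\<close> by (simp add: Q_def add_nonneg_pos)
  moreover have "P * Q > 0" using \<open>odd y\<close> by (auto simp: yPQ[symmetric])
  ultimately have "P > 0" by (simp add: zero_less_mult_iff)
  obtain c d where cd: "P = c^2" "Q = d^2"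
    using coprime_product_nth_power_int[OF \<open>P > 0\<close> \<open>Q > 0\<close> \<open>coprime P Q\<close> yPQ[symmetric]] .
  have "odd c" "odd \<bar>d\<bar>" using \<open>odd (P * Q)\<close> cd by simp_all
  moreover have "coprime \<bar>d\<bar> c" using \<open>coprime P Q\<close> cd by (simp add: coprime_commute)
  moreover have "\<bar>d\<bar>^2 = 4 * b^2 + c^2" "\<bar>a\<bar>^2 = b^2 + c^2" using cd by (simp_all add: P_def Q_def)
  moreover have "\<bar>d\<bar> > 0" "\<bar>a\<bar> > 0" using \<open>odd \<bar>d\<bar>\<close> \<open>P > 0\<close> \<open>b \<noteq> 0\<close> by (auto simp: P_def)
  ultimately show ?thesis using euler_quartic_of_pythagorean_triple[of "\<bar>d\<bar>" c b "\<bar>a\<bar>"] \<open>b \<noteq> 0\<close> by blast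
qed

lemma euler_quartic_even_coprime:
  fixes h y u v :: int
  assumes cop: "coprime (2 * h) y" and uv: "u * v = 3 * h^4" and e: "y^2 - 2 * h^2 = v - u"
    and "u \<noteq> 0"
  shows "coprime u v"
proof (rule coprime_if_no_common_prime)
  show "u \<noteq> 0 \<or> v \<noteq> 0" using \<open>u \<noteq> 0\<close> by simp
next
  fix p :: int assume p: "prime p" "p dvd u" "p dvd v"
  hence "p dvd y^2 - 2 * h^2" unfolding e by simp
  have "p dvd 3 * h^4" using p uv by (metis dvd_mult2)
  hence "p dvd 3 \<or> p dvd h" using p(1) by (simp add: prime_dvd_mult_iff prime_dvd_power_iff)
  thus False
  proof
    assume "p dvd 3"
    hence "p = 3" using p(1) primes_dvd_imp_eq[of p 3] by simp
    hence "3 dvd h \<and> 3 dvd y"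
      using \<open>p dvd y^2 - 2 * h^2\<close> by (intro three_dvd_square_minus_twice_square) simp
    thus False using cop coprime_common_divisor[of "2 * h" y 3] by auto
  next
    assume "p dvd h"
    moreover have "y^2 = (y^2 - 2 * h^2) + 2 * h * h" by (simp add: power2_eq_square)
    ultimately have "p dvd y"
      using p(1) \<open>p dvd y^2 - 2 * h^2\<close> by (metis dvd_add dvd_mult prime_dvd_power)
    thus False using cop coprime_common_divisor[of "2 * h" y p] p(1) \<open>p dvd h\<close> by auto
  qed
qed

lemma coprime_product_3_fourth_power:
  fixes u v h :: int
  assumes "u > 0" "v > 0" "coprime u v" "u * v = 3 * h^4"
  obtains a b where "coprime a b" "h^2 = a^2 * b^2" "u = a^4 \<and> v = 3 * b^4 \<or> u = 3 * b^4 \<and> v = a^4"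
proof -
  have split: "\<exists>a b. coprime a b \<and> h^2 = a^2 * b^2 \<and> s = a^4 \<and> t = 3 * b^4"
    if "s > 0" "t > 0" "coprime s t" "s * t = 3 * h^4" "3 dvd t" for s t
  proof -
    obtain w where t: "t = 3 * w" using \<open>3 dvd t\<close> by blast
    have "w > 0" "coprime s w" "s * w = h^4" using that t by simp_all
    then obtain a b where a: "s = a^4" and b: "w = b^4"
      using coprime_product_nth_power_int \<open>s > 0\<close> by blast
    have "(h^2)^2 = (a^2 * b^2)^2"
      using \<open>s * w = h^4\<close> a b by (simp add: power_mult_distrib flip: power_mult)
    hence "h^2 = a^2 * b^2" by (metis power2_eq_iff_nonneg zero_le_power2 mult_nonneg_nonneg)
    moreover have "coprime a b" using \<open>coprime s w\<close> a b by simp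
    ultimately show ?thesis using a b t by blast
  qed
  have "3 dvd u * v" using assms(4) by simp
  hence "3 dvd u \<or> 3 dvd v" by (simp add: prime_dvd_mult_iff)
  thus thesis
    using split[of u v] split[of v u] assms that by (auto simp: coprime_commute mult.commute)
qed

lemma euler_quartic_descent_even:
  assumes sol: "nontrivial_euler_quartic x y z" and "even x"
  obtains m n z' where "nontrivial_euler_quartic m n z'" "z' < z"
proof -
  from sol have cop: "coprime x y" and eq: "z^2 = x^4 - x^2 * y^2 + y^4"
    and "x \<noteq> 0" and zpos: "z > 0"
    by (simp_all add: nontrivial_euler_quartic_def)
  have "odd y" using cop \<open>even x\<close> coprime_common_divisor[of x y 2] by auto
  obtain h where h: "x = 2 * h" using \<open>even x\<close> by (rule evenE)
  have "h \<noteq> 0" using \<open>x \<noteq> 0\<close> h by simp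
  define e where "e = y^2 - 2 * h^2"
  have ze: "z^2 = e^2 + 12 * h^4"
    unfolding eq h e_def by (simp add: power2_eq_square power4_eq_xxxx algebra_simps)
  have "odd e" using \<open>odd y\<close> by (simp add: e_def)
  have "odd (z^2)" unfolding ze using \<open>odd e\<close> by simp
  hence "odd z" by simp
  have "e^2 < z^2" using ze \<open>h \<noteq> 0\<close> by simp
  hence "\<bar>e\<bar> < z" using zpos by (metis power2_abs power_less_imp_less_base less_imp_le)
  then obtain u v where uv: "0 < u" "0 < v" "z = u + v" "e = v - u"
    using odd_odd_halves \<open>odd z\<close> \<open>odd e\<close> by blast
  have "u * v = 3 * h^4" using ze uv by (simp add: power2_eq_square algebra_simps)
  moreover have "coprime u v"
    using euler_quartic_even_coprime cop h \<open>u * v = 3 * h^4\<close> uv(1,4) by (simp add: e_def)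
  ultimately obtain a b where "coprime a b" "h^2 = a^2 * b^2"
    and ab: "u = a^4 \<and> v = 3 * b^4 \<or> u = 3 * b^4 \<and> v = a^4"
    using coprime_product_3_fourth_power uv(1,2) by blast
  have y2: "y^2 = (v - u) + 2 * a^2 * b^2" using uv(4) \<open>h^2 = a^2 * b^2\<close> by (simp add: e_def)
  from ab show thesis
  proof
    assume "u = a^4 \<and> v = 3 * b^4"
    hence "y^2 + (a^2 - b^2)^2 = 4 * b^4"
      using y2 by (simp add: power2_eq_square power4_eq_xxxx algebra_simps)
    moreover have "odd (a^2 - b^2)" using \<open>odd z\<close> uv(3) \<open>u = a^4 \<and> v = 3 * b^4\<close> by auto
    ultimately show thesis using odd_square_plus_square_not_dvd_4 by (metis dvd_triv_left)
  next
    assume uv_ab: "u = 3 * b^4 \<and> v = a^4"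
    hence "b \<noteq> 0" using \<open>h^2 = a^2 * b^2\<close> \<open>h \<noteq> 0\<close> by auto
    have "y^2 = (a^2 - b^2) * (a^2 + 3 * b^2)"
      using y2 uv_ab by (simp add: power2_eq_square power4_eq_xxxx algebra_simps)
    then obtain m n where sol': "nontrivial_euler_quartic m n \<bar>a\<bar>"
      using euler_quartic_of_square_factorization \<open>coprime a b\<close> \<open>b \<noteq> 0\<close> \<open>odd y\<close> by blast
    have "a \<noteq> 0" using sol' by (simp add: nontrivial_euler_quartic_def)
    hence "\<bar>a\<bar> \<le> \<bar>a\<bar>^4" by (intro self_le_power) auto
    moreover have "b^4 > 0" using \<open>b \<noteq> 0\<close> by simp
    moreover have "z = \<bar>a\<bar>^4 + 3 * b^4" using uv(3) uv_ab by simp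
    ultimately have "\<bar>a\<bar> < z" by linarith
    with sol' show thesis by (rule that)
  qed
qed

lemma euler_quartic_descent:
  assumes sol: "nontrivial_euler_quartic x y z"
  obtains m n z' where "nontrivial_euler_quartic m n z'" "z' < z"
proof -
  have "odd x \<or> odd y" using sol coprime_common_divisor[of x y 2]
    by (auto simp: nontrivial_euler_quartic_def)
  moreover have "nontrivial_euler_quartic y x z"
    using sol by (auto simp: nontrivial_euler_quartic_def coprime_commute algebra_simps)
  ultimately show thesis
    using sol euler_quartic_descent_odd euler_quartic_descent_even that by blast
qed

lemma no_nontrivial_euler_quartic: "\<not> nontrivial_euler_quartic x y z"
proof (induction "nat z" arbitrary: x y z rule: less_induct)
  case less
  show ?case
  proof
    assume "nontrivial_euler_quartic x y z"
    then obtain m n z' where "nontrivial_euler_quartic m n z'" "z' < z"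
      by (rule euler_quartic_descent)
    moreover from this have "nat z' < nat z" by (simp add: nontrivial_euler_quartic_def)
    ultimately show False using less by blast
  qed
qed

theorem euler_quartic_int:
  fixes x y z :: int
  assumes "coprime x y" "z^2 = x^4 - x^2 * y^2 + y^4"
  shows "x = 0 \<or> y = 0 \<or> x^2 = y^2"
proof (rule ccontr)
  assume nontrivial: "\<not> ?thesis"
  moreover have "z \<noteq> 0"
  proof
    assume "z = 0"
    hence "(2 * x^2 - y^2)^2 + 3 * y^4 = 0"
      using assms(2) by (simp add: power2_eq_square power4_eq_xxxx algebra_simps)
    moreover have "y^4 \<ge> 0" "(2 * x^2 - y^2)^2 \<ge> 0" by simp_all
    ultimately have "y^4 = 0" by linarith
    hence "y = 0" by simp
    thus False using nontrivial by simp
  qed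
  ultimately have "nontrivial_euler_quartic x y \<bar>z\<bar>"
    using assms by (simp add: nontrivial_euler_quartic_def)
  thus False using no_nontrivial_euler_quartic by blast
qed

section \<open>Rational points on \<open>Y\<^sup>2 = (1 + X)(1 + 2X)(1 + 3X)\<close>\<close>

lemma rat_square_of_int_is_int:
  fixes t :: rat and n :: int
  assumes "t^2 = of_int n"
  shows "\<exists>k::int. t = of_int k"
proof -
  obtain a b where ab: "quotient_of t = (a, b)" by (cases "quotient_of t")
  have "b > 0" "coprime a b" "t = of_int a / of_int b"
    using quotient_of_denom_pos[OF ab] quotient_of_coprime[OF ab] quotient_of_div[OF ab] by simp_all
  with assms have "of_int (a^2) = (of_int (n * b^2) :: rat)"
    by (simp add: field_simps)
  hence "b dvd a^2" by (simp only: of_int_eq_iff) simp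
  hence "is_unit b"
    using \<open>coprime a b\<close> coprime_common_divisor[of b "a^2" b] by (simp add: coprime_commute)
  hence "b = 1" using \<open>b > 0\<close> by simp
  thus ?thesis using \<open>t = of_int a / of_int b\<close> by auto
qed

lemma euler_quartic_rat:
  fixes w v :: rat
  assumes "w^4 - w^2 + 1 = v^2"
  shows "w = 0 \<or> w^2 = 1"
proof -
  obtain p q where pq: "quotient_of w = (p, q)" by (cases "quotient_of w")
  have "q > 0" "coprime p q" "w = of_int p / of_int q"
    using quotient_of_denom_pos[OF pq] quotient_of_coprime[OF pq] quotient_of_div[OF pq] by simp_all
  hence wq: "w * of_int q = of_int p" by simp
  have "(v * of_int q^2)^2 = (w^4 - w^2 + 1) * of_int q^4"
    using assms by (simp add: power2_eq_square power4_eq_xxxx algebra_simps)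
  also have "\<dots> = (w * of_int q)^4 - (w * of_int q)^2 * of_int q^2 + of_int q^4"
    by (simp add: power2_eq_square power4_eq_xxxx algebra_simps)
  finally have eq: "(v * of_int q^2)^2 = of_int (p^4 - p^2 * q^2 + q^4)" using wq by simp
  then obtain k where "v * of_int q^2 = of_int k" using rat_square_of_int_is_int by blast
  with eq have "k^2 = p^4 - p^2 * q^2 + q^4" by (metis of_int_eq_iff of_int_power)
  hence "p = 0 \<or> p^2 = q^2" using euler_quartic_int[OF \<open>coprime p q\<close>] \<open>q > 0\<close> by auto
  thus ?thesis using \<open>w = of_int p / of_int q\<close> \<open>q > 0\<close>
    by (auto simp: power_divide simp flip: of_int_power)
qed

text \<open>
  If \<open>a\<^sup>2 = 1 + q\<close>, \<open>b\<^sup>2 = 1 + 2q\<close>, \<open>c\<^sup>2 = 1 + 3q\<close>, then \<open>(q, abc)\<close> lies on \<open>Y\<^sup>2 = ap_cubic X\<close>.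
\<close>

definition ap_cubic :: "'a::comm_ring_1 \<Rightarrow> 'a" where
  "ap_cubic X = (1 + X) * (1 + 2 * X) * (1 + 3 * X)"

lemma of_rat_ap_cubic: "of_rat (ap_cubic r) = ap_cubic (of_rat r :: 'a::field_char_0)"
  by (simp add: ap_cubic_def of_rat_add of_rat_mult)

lemma ap_cubic_rat_points:
  fixes r s :: rat
  assumes "s^2 = ap_cubic r"
  shows "r \<in> {0, -1, -1/2, -1/3, -2/3}"
proof -
  define Z where "Z = 6 * r + 3"
  have YZ: "(6 * s)^2 = Z * (Z - 1) * (Z + 3)" unfolding Z_def using assms
    by (simp add: ap_cubic_def power2_eq_square algebra_simps)
  show ?thesis
  proof (cases "Z = 0")
    case True thus ?thesis by (simp add: Z_def)
  next
    case False
    \<comment> \<open>a rational point on \<open>w\<^sup>4 - w\<^sup>2 + 1 = v\<^sup>2\<close>, which Euler's result pins down\<close>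
    define w v where "w = 6 * s / (2 * Z)" and "v = (Z^2 + 3) / (4 * Z)"
    have "w^2 = (6 * s)^2 / (2 * Z)^2" unfolding w_def by (rule power_divide)
    also have "\<dots> = (Z - 1) * (Z + 3) / (4 * Z)"
      unfolding YZ using False by (simp add: power2_eq_square field_simps)
    finally have w2: "w^2 = (Z - 1) * (Z + 3) / (4 * Z)" .
    have "w^4 - w^2 + 1 = (w^2)^2 - w^2 + 1" by (simp flip: power_mult)
    also have "\<dots> = v^2" unfolding w2 v_def using False by (simp add: power2_eq_square field_simps)
    finally have "w^4 - w^2 + 1 = v^2" .
    hence "w = 0 \<or> w^2 = 1" by (rule euler_quartic_rat)
    hence "(Z - 1) * (Z + 3) = 0 \<or> (Z - 1) * (Z + 3) = 4 * Z" using w2 False by auto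
    hence "(Z - 1) * (Z + 3) = 0 \<or> (Z - 3) * (Z + 1) = 0" by (auto simp: algebra_simps)
    thus ?thesis unfolding Z_def by auto
  qed
qed

text \<open>
  The cubic minus the square of the chord has leading coefficient 6 and vanishes at \<open>q\<close> and
  \<open>q'\<close>; its \<open>X\<^sup>2\<close>-coefficient \<open>11 - m\<^sup>2\<close> determines the third root.
\<close>

lemma ap_cubic_chord:
  fixes q q' m k :: "'a::field_char_0"
  assumes "(m * q + k)^2 = ap_cubic q" "(m * q' + k)^2 = ap_cubic q'" "q \<noteq> q'"
  shows "ap_cubic X - (m * X + k)^2 = 6 * (X - q) * (X - q') * (X - ((m^2 - 11) / 6 - q - q'))"
proof -
  define r where "r = (m^2 - 11) / 6 - q - q'"
  define A B where "A = 6 - 2 * m * k - 6 * (q * q' + q * r + q' * r)" and "B = 1 - k^2 + 6 * q * q' * r"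
  have linear: "ap_cubic Y - (m * Y + k)^2 - 6 * (Y - q) * (Y - q') * (Y - r) = A * Y + B" for Y
    unfolding ap_cubic_def A_def B_def r_def by (simp add: field_simps power2_eq_square)
  have "A * q + B = 0" "A * q' + B = 0" using linear[of q] linear[of q'] assms(1,2) by simp_all
  hence "A = 0" using assms(3) by (metis add_right_cancel mult_left_cancel)
  with \<open>A * q + B = 0\<close> have "B = 0" by simp
  show ?thesis using linear[of X] \<open>A = 0\<close> \<open>B = 0\<close> by (simp add: r_def)
qed

section \<open>Conjugation in a quadratic field\<close>

lemma int_square_not_2_3_6:
  fixes k :: int
  shows "k^2 \<noteq> 2" "k^2 \<noteq> 3" "k^2 \<noteq> 6"
proof -
  have "k^2 \<ge> 9" if "\<bar>k\<bar> \<ge> 3"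
    using power_mono[OF that, of 2] by simp
  hence "k^2 \<ge> 9 \<or> k \<in> {-2, -1, 0, 1, 2}" by force
  thus "k^2 \<noteq> 2" "k^2 \<noteq> 3" "k^2 \<noteq> 6" by auto
qed

lemma Rats_eq_nonsquare_multiple:
  fixes u v :: "'a::field_char_0"
  assumes "u \<in> \<rat>" "v \<in> \<rat>" "u^2 = of_int c * v^2" "\<And>k. k^2 \<noteq> c"
  shows "v = 0"
proof (rule ccontr)
  assume "v \<noteq> 0"
  obtain t where t: "u / v = of_rat t" using assms(1,2) by (metis Rats_cases Rats_divide)
  have "of_rat (t^2) = (of_rat (of_int c) :: 'a)"
    using assms(3) \<open>v \<noteq> 0\<close> by (simp flip: t add: of_rat_power power_divide)
  hence "t^2 = of_int c" by (simp only: of_rat_eq_iff)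
  then obtain k where "t = of_int k" using rat_square_of_int_is_int by blast
  with \<open>t^2 = of_int c\<close> have "k^2 = c" by (metis of_int_eq_iff of_int_power)
  with assms(4) show False by blast
qed

lemma Rats_coordinates_unique:
  fixes w :: "'a::field_char_0"
  assumes "w \<notin> \<rat>" "a \<in> \<rat>" "b \<in> \<rat>" "a' \<in> \<rat>" "b' \<in> \<rat>" "a + b * w = a' + b' * w"
  shows "a = a' \<and> b = b'"
proof -
  have "b = b'"
  proof (rule ccontr)
    assume "b \<noteq> b'"
    with assms(6) have "w = (a' - a) / (b - b')" by (simp add: field_simps)
    with assms(2-5) have "w \<in> \<rat>" by simp
    with assms(1) show False by blast
  qed
  with assms(6) show ?thesis by simp
qed

lemma quadratic_ext_basis:
  assumes "quadratic_ext_of_rat TYPE('a)"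
  obtains w :: "'a::field_char_0" where "w \<notin> \<rat>" "\<And>x. \<exists>a\<in>\<rat>. \<exists>b\<in>\<rat>. x = a + b * w"
proof -
  interpret V: vector_space "\<lambda>(r::rat) (y::'a). of_rat r * y"
    by unfold_locales (simp_all add: algebra_simps of_rat_add of_rat_mult)
  have dim2: "V.dim (UNIV::'a set) = 2" using assms by (simp add: quadratic_ext_of_rat_def)
  obtain B where B: "V.independent B" "UNIV \<subseteq> V.span B" "card B = 2"
    using V.basis_exists[of "UNIV::'a set"] dim2 by metis
  have "finite B" using B(3) by (metis card.infinite zero_neq_numeral)
  have span1: "V.span {1::'a} = \<rat>" unfolding V.span_singleton Rats_def by auto
  have ind1: "V.independent {1::'a}" by simp
  obtain w :: 'a where w: "w \<notin> \<rat>"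
  proof (rule ccontr)
    assume "\<not> thesis"
    hence "V.span {1::'a} = V.span UNIV" using that span1 by auto
    hence "V.dim (UNIV::'a set) = card {1::'a}" using V.dim_eq_card[OF _ ind1] by simp
    thus False using dim2 by simp
  qed
  have ind2: "V.independent {w, 1}"
    using V.independent_insertI[OF _ ind1, of w] w span1 by simp
  have "x \<in> V.span {w, 1}" for x
  proof (rule ccontr)
    assume x: "x \<notin> V.span {w, 1}"
    hence "x \<noteq> w" "x \<noteq> 1" using V.span_base[of _ "{w, 1}"] by auto
    moreover have "w \<noteq> 1" using w by auto
    ultimately have "card {x, w, 1} = 3" by simp
    moreover have "card {x, w, 1} \<le> card B"
      using V.independent_span_bound[OF \<open>finite B\<close> V.independent_insertI[OF x ind2]] B(2) by auto
    ultimately show False using B(3) by simp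
  qed
  hence "\<exists>a\<in>\<rat>. \<exists>b\<in>\<rat>. x = a + b * w" for x
  proof -
    obtain k where "x - of_rat k * w \<in> V.span {1}"
      using \<open>x \<in> V.span {w, 1}\<close> unfolding V.span_insert by blast
    hence "x - of_rat k * w \<in> \<rat>" using span1 by simp
    thus ?thesis by (intro bexI[of _ "x - of_rat k * w"] bexI[of _ "of_rat k"]) simp_all
  qed
  with w show thesis by (rule that)
qed

lemma quadratic_ext_sqrt_basis:
  assumes "quadratic_ext_of_rat TYPE('a)"
  obtains w :: "'a::field_char_0" where "w \<notin> \<rat>" "w^2 \<in> \<rat>" "\<And>x. \<exists>a\<in>\<rat>. \<exists>b\<in>\<rat>. x = a + b * w"
proof -
  obtain w0 :: 'a where w0: "w0 \<notin> \<rat>" and coords: "\<And>x. \<exists>a\<in>\<rat>. \<exists>b\<in>\<rat>. x = a + b * w0"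
    using quadratic_ext_basis[OF assms] by blast
  obtain c d where cd: "c \<in> \<rat>" "d \<in> \<rat>" "w0^2 = c + d * w0" using coords by blast
  define w where "w = w0 - d / 2"
  have "w^2 = w0^2 - d * w0 + d^2 / 4" unfolding w_def by (simp add: power2_eq_square field_simps)
  hence "w^2 = c + d^2 / 4" using cd(3) by simp
  have "w \<notin> \<rat>" using w0 cd(2) unfolding w_def by (metis Rats_add Rats_divide Rats_number_of diff_add_cancel)
  moreover have "w^2 \<in> \<rat>" using \<open>w^2 = c + d^2 / 4\<close> cd by simp
  moreover have "\<exists>a\<in>\<rat>. \<exists>b\<in>\<rat>. x = a + b * w" for x
  proof -
    obtain a b where "a \<in> \<rat>" "b \<in> \<rat>" "x = a + b * w0" using coords by blast
    moreover have "a + b * w0 = (a + b * d / 2) + b * w" by (simp add: w_def field_simps)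
    ultimately show ?thesis using cd(2) by (metis Rats_add Rats_divide Rats_mult Rats_number_of)
  qed
  ultimately show thesis by (rule that)
qed

locale quadratic_conjugation =
  fixes \<sigma> :: "'a::field_char_0 \<Rightarrow> 'a"
  assumes conj_add [simp]: "\<sigma> (x + y) = \<sigma> x + \<sigma> y"
    and conj_mult [simp]: "\<sigma> (x * y) = \<sigma> x * \<sigma> y"
    and conj_conj [simp]: "\<sigma> (\<sigma> x) = x"
    and conj_fixed_iff: "\<sigma> x = x \<longleftrightarrow> x \<in> \<rat>"
begin

lemma conj_Rats [simp]: "x \<in> \<rat> \<Longrightarrow> \<sigma> x = x"
  by (simp add: conj_fixed_iff)

lemma conj_numeral [simp]: "\<sigma> (numeral n) = numeral n"
  by simp

lemma conj_minus [simp]: "\<sigma> (- x) = - \<sigma> x"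
  using conj_add[of x "- x"] by (simp add: eq_neg_iff_add_eq_0 add.commute)

lemma conj_diff [simp]: "\<sigma> (x - y) = \<sigma> x - \<sigma> y"
  using conj_add[of x "- y"] by simp

lemma conj_eq_0_iff [simp]: "\<sigma> x = 0 \<longleftrightarrow> x = 0"
  by (metis conj_Rats conj_conj Rats_0)

lemma conj_inverse [simp]: "\<sigma> (inverse x) = inverse (\<sigma> x)"
proof (cases "x = 0")
  case False
  hence "\<sigma> x * \<sigma> (inverse x) = 1" by (simp flip: conj_mult)
  thus ?thesis by (rule inverse_unique[symmetric])
qed simp

lemma conj_divide [simp]: "\<sigma> (x / y) = \<sigma> x / \<sigma> y"
  by (simp add: divide_inverse)

lemma conj_power [simp]: "\<sigma> (x ^ n) = \<sigma> x ^ n"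
  by (induction n) simp_all

lemma conj_ap_cubic [simp]: "\<sigma> (ap_cubic x) = ap_cubic (\<sigma> x)"
  by (simp add: ap_cubic_def)

lemma norm_in_Rats: "x * \<sigma> x \<in> \<rat>"
  by (simp add: conj_fixed_iff[symmetric] mult.commute)

lemma conj_eq_neg_if_square_in_Rats:
  assumes "s^2 \<in> \<rat>" "s \<notin> \<rat>"
  shows "\<sigma> s = - s"
proof -
  have "(\<sigma> s)^2 = s^2" using conj_Rats[OF assms(1)] by simp
  hence "(\<sigma> s - s) * (\<sigma> s + s) = 0" by (simp add: algebra_simps power2_eq_square)
  moreover have "\<sigma> s \<noteq> s" using assms(2) conj_fixed_iff by blast
  ultimately show ?thesis by (simp add: eq_neg_iff_add_eq_0)
qed

lemma norm_eq_0_if_nonsquare_multiple: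
  assumes "u \<in> \<rat>" "u^2 = of_int c * (z * \<sigma> z)^2" "\<And>j. j^2 \<noteq> c"
  shows "z = 0"
  using Rats_eq_nonsquare_multiple[OF assms(1) norm_in_Rats assms(2,3)] by simp

lemma square_multiples_2_3_eq_0:
  fixes s t u :: 'a
  assumes "t^2 = 2 * s^2" "u^2 = 3 * s^2"
  shows "s = 0"
proof (rule ccontr)
  assume "s \<noteq> 0"
  have nonsquare: "v \<notin> \<rat>" if "v^2 = of_int c" "\<And>j. j^2 \<noteq> c" for v :: 'a and c :: int
    using Rats_eq_nonsquare_multiple[of v 1 c] that by auto
  define v w where "v = t / s" and "w = u / s"
  have "v^2 = 2" "w^2 = 3" using assms \<open>s \<noteq> 0\<close> by (simp_all add: v_def w_def power_divide)
  hence "v \<notin> \<rat>" "w \<notin> \<rat>" "v * w \<notin> \<rat>"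
    using nonsquare[of v 2] nonsquare[of w 3] nonsquare[of "v * w" 6] int_square_not_2_3_6
    by (simp_all add: power_mult_distrib)
  hence "\<sigma> (v * w) = v * w" using conj_eq_neg_if_square_in_Rats \<open>v^2 = 2\<close> \<open>w^2 = 3\<close> by simp
  with \<open>v * w \<notin> \<rat>\<close> show False using conj_fixed_iff by blast
qed

end

lemma quadratic_conjugation_exists:
  assumes "quadratic_ext_of_rat TYPE('a::field_char_0)"
  shows "\<exists>\<sigma> :: 'a \<Rightarrow> 'a. quadratic_conjugation \<sigma>"
proof -
  obtain w :: 'a where w: "w \<notin> \<rat>" "w^2 \<in> \<rat>"
    and coords: "\<And>x. \<exists>a\<in>\<rat>. \<exists>b\<in>\<rat>. x = a + b * w"
    using quadratic_ext_sqrt_basis[OF assms] by blast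
  define \<sigma> where "\<sigma> x = (THE y. \<exists>a\<in>\<rat>. \<exists>b\<in>\<rat>. x = a + b * w \<and> y = a - b * w)" for x
  have \<sigma>: "\<sigma> (a + b * w) = a - b * w" if "a \<in> \<rat>" "b \<in> \<rat>" for a b
    unfolding \<sigma>_def by (rule the_equality) (use that Rats_coordinates_unique[OF w(1)] in blast)+
  show ?thesis
  proof (intro exI[of _ \<sigma>] quadratic_conjugation.intro)
    fix x y :: 'a
    obtain a b c d where ab: "a \<in> \<rat>" "b \<in> \<rat>" "x = a + b * w"
      and cd: "c \<in> \<rat>" "d \<in> \<rat>" "y = c + d * w"
      using coords by meson
    have \<sigma>x: "\<sigma> x = a - b * w" and \<sigma>y: "\<sigma> y = c - d * w" using ab cd by (simp_all add: \<sigma>)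
    have sum: "x + y = (a + c) + (b + d) * w" using ab cd by (simp add: algebra_simps)
    have "\<sigma> (x + y) = (a + c) - (b + d) * w" unfolding sum using ab cd by (intro \<sigma>) simp_all
    thus "\<sigma> (x + y) = \<sigma> x + \<sigma> y" unfolding \<sigma>x \<sigma>y by (simp add: algebra_simps)
    have prod: "x * y = (a * c + b * d * w^2) + (a * d + b * c) * w"
      using ab cd by (simp add: algebra_simps power2_eq_square)
    have "\<sigma> (x * y) = (a * c + b * d * w^2) - (a * d + b * c) * w"
      unfolding prod using ab cd w(2) by (intro \<sigma>) simp_all
    thus "\<sigma> (x * y) = \<sigma> x * \<sigma> y" unfolding \<sigma>x \<sigma>y by (simp add: algebra_simps power2_eq_square)
    have "\<sigma> x = a + (- b) * w" unfolding \<sigma>x by simp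
    hence "\<sigma> (\<sigma> x) = a - (- b) * w" using ab by (simp only:) (intro \<sigma>; simp)
    thus "\<sigma> (\<sigma> x) = x" using ab by simp
    show "\<sigma> x = x \<longleftrightarrow> x \<in> \<rat>"
    proof
      assume "\<sigma> x = x"
      hence "2 * b * w = 0" using ab(3) \<sigma>x by (simp add: algebra_simps)
      moreover have "w \<noteq> 0" using w(1) by auto
      ultimately show "x \<in> \<rat>" using ab by simp
    next
      assume "x \<in> \<rat>"
      thus "\<sigma> x = x" using \<sigma>[of x 0] by simp
    qed
  qed
qed

context quadratic_conjugation
begin

text \<open>
  The chord through \<open>(q, y)\<close> and \<open>(\<sigma> q, \<sigma> y)\<close> is \<open>\<sigma>\<close>-invariant, hence rational, and so is its
  third intersection with the curve.
\<close>

lemma ap_cubic_conj_chord: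
  assumes "y^2 = ap_cubic q" "q \<notin> \<rat>"
  obtains m k r where "m \<in> \<rat>" "k \<in> \<rat>" "r \<in> {0, -1, -1/2, -1/3, -2/3}"
    "\<And>X. ap_cubic X - (m * X + k)^2 = 6 * (X - q) * (X - \<sigma> q) * (X - r)"
proof -
  have "q - \<sigma> q \<noteq> 0" using assms(2) conj_fixed_iff[of q] by simp
  define m where "m = (y - \<sigma> y) / (q - \<sigma> q)"
  define k where "k = y - m * q"
  define r where "r = (m^2 - 11) / 6 - q - \<sigma> q"
  have "\<sigma> m = (\<sigma> y - y) / (\<sigma> q - q)" unfolding m_def by simp
  also have "\<dots> = m" unfolding m_def by (metis minus_diff_eq divide_minus_left divide_minus_right)
  finally have "m \<in> \<rat>" by (simp only: conj_fixed_iff)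
  have y: "m * q + k = y" by (simp add: k_def)
  have y': "m * \<sigma> q + k = \<sigma> y"
    using \<open>q - \<sigma> q \<noteq> 0\<close> unfolding k_def m_def by (simp add: divide_simps) (simp add: algebra_simps)
  have "k \<in> \<rat>" "r \<in> \<rat>"
    using y' \<open>m \<in> \<rat>\<close> conj_fixed_iff[of k] conj_fixed_iff[of r] by (simp_all add: k_def r_def algebra_simps)
  have "(\<sigma> y)^2 = ap_cubic (\<sigma> q)" using arg_cong[OF assms(1), of \<sigma>] by simp
  with assms(1) y y' \<open>q - \<sigma> q \<noteq> 0\<close> have chord:
    "ap_cubic X - (m * X + k)^2 = 6 * (X - q) * (X - \<sigma> q) * (X - r)" for X
    unfolding r_def by (intro ap_cubic_chord) simp_all
  obtain r0 m0 k0 where rmk: "r = of_rat r0" "m = of_rat m0" "k = of_rat k0"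
    using \<open>r \<in> \<rat>\<close> \<open>m \<in> \<rat>\<close> \<open>k \<in> \<rat>\<close> by (metis Rats_cases)
  have "of_rat ((m0 * r0 + k0)^2) = (of_rat (ap_cubic r0) :: 'a)"
    using chord[of r] by (simp add: rmk of_rat_ap_cubic of_rat_add of_rat_mult of_rat_power)
  hence "r0 \<in> {0, -1, -1/2, -1/3, -2/3}" by (intro ap_cubic_rat_points) (simp only: of_rat_eq_iff)
  hence "r \<in> {0, -1, -1/2, -1/3, -2/3}" using rmk(1) by (auto simp: of_rat_minus of_rat_divide)
  from \<open>m \<in> \<rat>\<close> \<open>k \<in> \<rat>\<close> this chord show thesis by (rule that)
qed

text \<open>
  The cubic vanishes at \<open>X = -1\<close> and \<open>X = -1/2\<close>, where the chord identity equates a rational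
  square with \<open>6(1 + r)\<close> resp. \<open>3(1 + 2r)\<close> times a nonzero squared norm; for the other candidate
  roots these factors are not rational squares.
\<close>

lemma ap_cubic_conj_chord_third_root:
  assumes a: "a^2 = 1 + q" and b: "b^2 = 1 + 2 * q" and "a \<noteq> 0" "b \<noteq> 0" "m \<in> \<rat>" "k \<in> \<rat>"
    and r: "r \<in> {0, -1, -1/2, -1/3, -2/3}"
    and chord: "\<And>X. ap_cubic X - (m * X + k)^2 = 6 * (X - q) * (X - \<sigma> q) * (X - r)"
  shows "r = -1/3"
proof -
  have "(\<sigma> a)^2 = 1 + \<sigma> q" "(\<sigma> b)^2 = 1 + 2 * \<sigma> q"
    using arg_cong[OF a, of \<sigma>] arg_cong[OF b, of \<sigma>] by simp_all
  hence "(a * \<sigma> a)^2 = (1 + q) * (1 + \<sigma> q)" "(b * \<sigma> b)^2 = (1 + 2 * q) * (1 + 2 * \<sigma> q)"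
    by (simp_all add: power_mult_distrib a b)
  hence at_minus_1: "(k - m)^2 = 6 * (1 + r) * (a * \<sigma> a)^2"
    and "8 * (2 * k - m)^2 = 8 * (3 * (1 + 2 * r) * (b * \<sigma> b)^2)"
    using chord[of "-1"] chord[of "-1/2"] by (simp_all add: ap_cubic_def field_simps power2_eq_square)
  hence at_minus_half: "(2 * k - m)^2 = 3 * (1 + 2 * r) * (b * \<sigma> b)^2" by simp
  have "k - m \<in> \<rat>" "2 * k - m \<in> \<rat>" using \<open>k \<in> \<rat>\<close> \<open>m \<in> \<rat>\<close> by simp_all
  have "j^2 \<noteq> -3" for j :: int by (smt (verit) zero_le_power2)
  hence "r \<noteq> -1"
    using norm_eq_0_if_nonsquare_multiple[of "2 * k - m" "-3" b] at_minus_half \<open>b \<noteq> 0\<close> \<open>2 * k - m \<in> \<rat>\<close>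
    by auto
  moreover have "r \<noteq> 0" "r \<noteq> -1/2" "r \<noteq> -2/3"
    using norm_eq_0_if_nonsquare_multiple[of "k - m" _ a] at_minus_1 \<open>a \<noteq> 0\<close> \<open>k - m \<in> \<rat>\<close>
      int_square_not_2_3_6
    by force+
  ultimately show ?thesis using r by auto
qed

lemma ap_cubic_conj_relation:
  assumes a: "a^2 = 1 + q" and b: "b^2 = 1 + 2 * q" and c: "c^2 = 1 + 3 * q" and "q \<notin> \<rat>"
  shows "3 * q * \<sigma> q + q + \<sigma> q = 0"
proof -
  have "(a * b * c)^2 = ap_cubic q" by (simp add: ap_cubic_def power_mult_distrib a b c)
  then obtain m k r where "m \<in> \<rat>" "k \<in> \<rat>" "r \<in> {0, -1, -1/2, -1/3, -2/3}"
    and chord: "\<And>X. ap_cubic X - (m * X + k)^2 = 6 * (X - q) * (X - \<sigma> q) * (X - r)"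
    using ap_cubic_conj_chord \<open>q \<notin> \<rat>\<close> by blast
  have "q \<noteq> -1" "q \<noteq> -1/2" using \<open>q \<notin> \<rat>\<close> by auto
  hence "a \<noteq> 0" "b \<noteq> 0" using a b by (auto simp: eq_neg_iff_add_eq_0 field_simps)
  hence "r = -1/3" using ap_cubic_conj_chord_third_root a b \<open>m \<in> \<rat>\<close> \<open>k \<in> \<rat>\<close> \<open>r \<in> _\<close> chord by blast
  have "(m * (-1/3) + k)^2 = 0" using chord[of "-1/3"] \<open>r = -1/3\<close> by (simp add: ap_cubic_def)
  hence "m = 3 * k" by (simp add: field_simps)
  have "12 * k^2 = 12 * ((1 + q) * (1 + \<sigma> q))"
    using chord[of "-1"] \<open>r = -1/3\<close> \<open>m = 3 * k\<close> by (simp add: ap_cubic_def power2_eq_square field_simps)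
  hence "k^2 = (1 + q) * (1 + \<sigma> q)" by simp
  moreover have "1 - k^2 = 2 * q * \<sigma> q"
    using chord[of 0] \<open>r = -1/3\<close> by (simp add: ap_cubic_def)
  ultimately have "- q = \<sigma> q + 3 * q * \<sigma> q" by (simp add: algebra_simps)
  thus ?thesis by (simp add: neg_eq_iff_add_eq_0 algebra_simps)
qed

lemma conj_relation_imp_Rats:
  assumes "3 * q * \<sigma> q + q + \<sigma> q = 0" "q \<noteq> 0"
  shows "(3 * q + 2)^2 / q^2 \<in> \<rat>"
proof -
  have "(3 * \<sigma> q + 2) * q + (3 * q + 2) * \<sigma> q = 2 * (3 * q * \<sigma> q + q + \<sigma> q)"
    by (simp add: algebra_simps)
  hence "(3 * \<sigma> q + 2) * q = - ((3 * q + 2) * \<sigma> q)"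
    using assms(1) by (simp add: eq_neg_iff_add_eq_0)
  hence "(3 * \<sigma> q + 2) / \<sigma> q = - ((3 * q + 2) / q)"
    using assms(2) by (simp add: field_simps)
  hence "\<sigma> (((3 * q + 2) / q)^2) = ((3 * q + 2) / q)^2" by simp
  thus ?thesis by (simp only: conj_fixed_iff power_divide)
qed

end

theorem proposition2p1:
  fixes x :: "nat \<Rightarrow> 'a::field_char_0"
  assumes "quadratic_ext_of_rat TYPE('a)"
    and "\<exists>i\<in>{0..3}. x i \<noteq> 0"
    and "\<forall>i\<in>{1,2,3}. \<forall>j\<in>{1,2,3}. x i ^ 2 - x (i - 1) ^ 2 = x j ^ 2 - x (j - 1) ^ 2"
  shows "x 0 \<noteq> 0 \<and>
    (let q = (x 1 / x 0) ^ 2 - 1 in q = 0 \<or> (3 * q + 2) ^ 2 / q ^ 2 \<in> \<rat>)"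
proof -
  obtain \<sigma> :: "'a \<Rightarrow> 'a" where "quadratic_conjugation \<sigma>"
    using quadratic_conjugation_exists[OF assms(1)] by blast
  then interpret quadratic_conjugation \<sigma> .
  have x2: "x 2 ^ 2 = 2 * x 1 ^ 2 - x 0 ^ 2"
    using assms(3)[rule_format, of 2 1] by (simp add: algebra_simps)
  have x3: "x 3 ^ 2 = 3 * x 1 ^ 2 - 2 * x 0 ^ 2"
    using assms(3)[rule_format, of 3 2] x2 by (simp add: algebra_simps)
  have "x 0 \<noteq> 0"
  proof
    assume "x 0 = 0"
    hence "x 1 = 0" using square_multiples_2_3_eq_0 x2 x3 by simp
    moreover have "{0..3::nat} = {0, 1, 2, 3}" by auto
    ultimately show False using assms(2) x2 x3 \<open>x 0 = 0\<close> by auto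
  qed
  define q where "q = (x 1 / x 0)^2 - 1"
  have "(x 1 / x 0)^2 = 1 + q" "(x 2 / x 0)^2 = 1 + 2 * q" "(x 3 / x 0)^2 = 1 + 3 * q"
    using x2 x3 \<open>x 0 \<noteq> 0\<close> by (simp_all add: q_def field_simps)
  hence "q \<notin> \<rat> \<Longrightarrow> (3 * q + 2)^2 / q^2 \<in> \<rat>"
    using ap_cubic_conj_relation conj_relation_imp_Rats by (metis Rats_0)
  hence "(3 * q + 2)^2 / q^2 \<in> \<rat>" by (cases "q \<in> \<rat>") simp_all
  with \<open>x 0 \<noteq> 0\<close> show ?thesis unfolding q_def Let_def by blast
qed

end
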